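(* Let $(t:\mathcal L_1\to\mathcal L_0,\llbracket\cdot_\lambda\cdot\rrbracket,\mathcal N_0,\mathcal N_1)$ be a strict $2$-term Nijenhuis $\mathcal L_\infty$-conformal algebra. Then $(\mathcal L_0\oplus\mathcal L_1,[\cdot_\lambda\cdot],\mathcal N_0\oplus\mathcal N_1)$ is a Nijenhuis Lie conformal algebra, where $$[(p,m)_\lambda(q,n)]:=\big(\llbracket p_\lambda q\rrbracket,\ \llbracket p_\lambda n\rrbracket-\llbracket q_{-\partial-\lambda}m\rrbracket+\llbracket t(m)_\lambda n\rrbracket\big),\qquad (p,m),(q,n)\in\mathcal L_0\oplus\mathcal L_1 .$$
   Context: All spaces are over $\mathbb C$. A Lie conformal algebra is a $\mathbb C[\partial]$-module with a $\mathbb C$-bilinear $\lambda$-bracket satisfying $[\partial a_\lambda b]=-\lambda[a_\lambda b]$, $[a_\lambda\partial b]=(\partial+\lambda)[a_\lambda b]$, $[a_\lambda b]=-[b_{-\partial-\lambda}a]$, $[a_\lambda[b_\mu c]]=[[a_\lambda b]_{\lambda+\mu}c]+[b_\mu[a_\lambda c]]$; a Nijenhuis operator is a $\mathbb C[\partial]$-linear $\mathcal N$ with $[\mathcal N(p)_\lambda\mathcal N(q)]=\mathcal N([\mathcal N(p)_\lambda q]+[p_\lambda\mathcal N(q)]-\mathcal N([p_\lambda q]))$, and a Nijenhuis Lie conformal algebra is a Lie conformal algebra with a Nijenhuis operator. A strict $2$-term Nijenhuis $\mathcal L_\infty$-conformal algebra consists of a $\mathbb C[\partial]$-linear map $t:\mathcal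 L_1\to\mathcal L_0$, conformal sesquilinear $\mathbb C$-bilinear brackets $\llbracket\cdot_\lambda\cdot\rrbracket$: $\mathcal L_0\otimes\mathcal L_0\to\mathcal L_0[\lambda]$, $\mathcal L_0\otimes\mathcal L_1\to\mathcal L_1[\lambda]$, $\mathcal L_1\otimes\mathcal L_0\to\mathcal L_1[\lambda]$ (with $\llbracket m_\lambda n\rrbracket=0$ on $\mathcal L_1$), and $\mathbb C[\partial]$-linear $\mathcal N_0:\mathcal L_0\to\mathcal L_0$, $\mathcal N_1:\mathcal L_1\to\mathcal L_1$, such that for all $p,q,r\in\mathcal L_0$, $m,n\in\mathcal L_1$: $\llbracket p_\lambda m\rrbracket=-\llbracket m_{-\partial-\lambda}p\rrbracket$; $\llbracket p_\lambda q\rrbracket=-\llbracket q_{-\partial-\lambda}p\rrbracket$; $t\llbracket p_\lambda m\rrbracket=\llbracket p_\lambda t(m)\rrbracket$; $\llbracket t(m)_\lambda n\rrbracket=\llbracket m_\lambda t(n)\rrbracket$; $\llbracket p_\lambda\llbracket q_\mu r\rrbracket\rrbracket-\llbracket\llbracket p_\lambda q\rrbracket_{\lambda+\mu}r\rrbracket-\llbracket q_\mu\llbracket p_\lambda r\rrbracket\rrbracket=0$; $\llbracket p_\lambda\llbracket q_\mu m\rrbracket\rrbracket-\llbracket\llbracket p_\lambda q\rrbracket_{\lambda+\mu}m\rrbracket-\llbracket q_\mu\llbracket p_\lambda m\rrbracket\rrbracket=0$; $t\circ\mathcal N_1=\mathcal N_0\circ t$; $\mathcal N_0(\llbracket\mathcal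 N_0(p)_\lambda q\rrbracket+\llbracket p_\lambda\mathcal N_0(q)\rrbracket-\mathcal N_0\llbracket p_\lambda q\rrbracket)=\llbracket\mathcal N_0(p)_\lambda\mathcal N_0(q)\rrbracket$; $\mathcal N_1(\llbracket\mathcal N_0(p)_\lambda m\rrbracket+\llbracket p_\lambda\mathcal N_1(m)\rrbracket-\mathcal N_1\llbracket p_\lambda m\rrbracket)=\llbracket\mathcal N_0(p)_\lambda\mathcal N_1(m)\rrbracket$. *)

theory Defs
  imports Complex_Main "HOL-Library.Product_Plus"
begin

text \<open>A C-vector space is a type of class ab_group_add together with a
scalar multiplication sc :: complex => 'v => 'v satisfying the locale vector_space.
A C[d]-module is such a space with a C-linear endomorphism d (the action of the
derivation).  An element of V[lambda] is represented by its coefficient function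
nat => V (coefficient of lambda^j) with finite support.  A lambda-bracket is a map
br :: 'a => 'b => nat => 'c, where br a b j is the coefficient of lambda^j in
[a_lambda b].  Polynomials in two variables lambda, mu are coefficient functions
(i, j) for lambda^i mu^j.\<close>

definition cmodule :: "(complex \<Rightarrow> 'v::ab_group_add \<Rightarrow> 'v) \<Rightarrow> ('v \<Rightarrow> 'v) \<Rightarrow> bool" where
  "cmodule sc d \<longleftrightarrow> vector_space sc \<and> Vector_Spaces.linear sc sc d"

definition cd_linear ::
  "(complex \<Rightarrow> 'a::ab_group_add \<Rightarrow> 'a) \<Rightarrow> ('a \<Rightarrow> 'a) \<Rightarrow>
   (complex \<Rightarrow> 'b::ab_group_add \<Rightarrow> 'b) \<Rightarrow> ('b \<Rightarrow> 'b) \<Rightarrow> ('a \<Rightarrow> 'b) \<Rightarrow> bool" where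
  "cd_linear s1 d1 s2 d2 f \<longleftrightarrow> Vector_Spaces.linear s1 s2 f \<and> (\<forall>a. f (d1 a) = d2 (f a))"

definition fin_poly :: "(nat \<Rightarrow> 'v::zero) \<Rightarrow> bool" where
  "fin_poly p \<longleftrightarrow> finite {j. p j \<noteq> 0}"

definition lbracket ::
  "(complex \<Rightarrow> 'a::ab_group_add \<Rightarrow> 'a) \<Rightarrow> (complex \<Rightarrow> 'b::ab_group_add \<Rightarrow> 'b) \<Rightarrow>
   (complex \<Rightarrow> 'c::ab_group_add \<Rightarrow> 'c) \<Rightarrow> ('a \<Rightarrow> 'b \<Rightarrow> nat \<Rightarrow> 'c) \<Rightarrow> bool" where
  "lbracket s1 s2 s3 br \<longleftrightarrow>
     (\<forall>a b. fin_poly (br a b)) \<and>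
     (\<forall>b j. Vector_Spaces.linear s1 s3 (\<lambda>a. br a b j)) \<and>
     (\<forall>a j. Vector_Spaces.linear s2 s3 (\<lambda>b. br a b j))"

text \<open>Conformal sesquilinearity: [d a_lambda b] = -lambda [a_lambda b] and
  [a_lambda d b] = (d + lambda) [a_lambda b].\<close>
definition sesquilinear ::
  "('a \<Rightarrow> 'a) \<Rightarrow> ('b \<Rightarrow> 'b) \<Rightarrow> ('c::ab_group_add \<Rightarrow> 'c) \<Rightarrow> ('a \<Rightarrow> 'b \<Rightarrow> nat \<Rightarrow> 'c) \<Rightarrow> bool" where
  "sesquilinear d1 d2 d3 br \<longleftrightarrow>
     (\<forall>a b j. br (d1 a) b j = - (if j = 0 then 0 else br a b (j - 1))) \<and>
     (\<forall>a b j. br a (d2 b) j = d3 (br a b j) + (if j = 0 then 0 else br a b (j - 1)))"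

text \<open>Substitution lambda := -d - lambda in p(lambda) = sum_k lambda^k c_k, where d acts on the
  coefficients: sum_k (-d-lambda)^k c_k; coefficient of lambda^i is
  sum_k (-1)^k (k choose i) d^(k-i) c_k.\<close>
definition subst_mdl :: "(complex \<Rightarrow> 'v::ab_group_add \<Rightarrow> 'v) \<Rightarrow> ('v \<Rightarrow> 'v) \<Rightarrow> (nat \<Rightarrow> 'v) \<Rightarrow> nat \<Rightarrow> 'v" where
  "subst_mdl sc d p i = (\<Sum>k\<in>{k. p k \<noteq> 0}. sc ((-1) ^ k * of_nat (k choose i)) ((d ^^ (k - i)) (p k)))"

text \<open>Coefficient of lambda^i mu^j in [a_lambda [b_mu c]] (outer bracket B1, inner B2).\<close>
definition nest_left :: "('a \<Rightarrow> 'y \<Rightarrow> nat \<Rightarrow> 'z) \<Rightarrow> ('b \<Rightarrow> 'c \<Rightarrow> nat \<Rightarrow> 'y) \<Rightarrow> 'a \<Rightarrow> 'b \<Rightarrow> 'c \<Rightarrow> nat \<Rightarrow> nat \<Rightarrow> 'z" where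
  "nest_left B1 B2 a b c i j = B1 a (B2 b c j) i"

text \<open>Coefficient of lambda^i mu^j in [b_mu [a_lambda c]] (outer bracket B1, inner B2).\<close>
definition nest_right :: "('b \<Rightarrow> 'y \<Rightarrow> nat \<Rightarrow> 'z) \<Rightarrow> ('a \<Rightarrow> 'c \<Rightarrow> nat \<Rightarrow> 'y) \<Rightarrow> 'a \<Rightarrow> 'b \<Rightarrow> 'c \<Rightarrow> nat \<Rightarrow> nat \<Rightarrow> 'z" where
  "nest_right B1 B2 a b c i j = B1 b (B2 a c i) j"

text \<open>Coefficient of lambda^i mu^j in [[a_lambda b]_(lambda+mu) c]: with [a_lambda b] = sum_k lambda^k e_k
  and [e_nu c] = sum_l nu^l f_(k,l), this is sum_(k,l) lambda^k (lambda+mu)^l f_(k,l).\<close>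
definition nest_mid :: "(complex \<Rightarrow> 'z::ab_group_add \<Rightarrow> 'z) \<Rightarrow> ('y \<Rightarrow> 'c \<Rightarrow> nat \<Rightarrow> 'z) \<Rightarrow> ('a \<Rightarrow> 'b \<Rightarrow> nat \<Rightarrow> 'y) \<Rightarrow>
    'a \<Rightarrow> 'b \<Rightarrow> 'c \<Rightarrow> nat \<Rightarrow> nat \<Rightarrow> 'z" where
  "nest_mid sc B1 B2 a b c i j = (\<Sum>l\<in>{j..i+j}. sc (of_nat (l choose j)) (B1 (B2 a b (i + j - l)) c l))"

definition lie_conformal ::
  "(complex \<Rightarrow> 'v::ab_group_add \<Rightarrow> 'v) \<Rightarrow> ('v \<Rightarrow> 'v) \<Rightarrow> ('v \<Rightarrow> 'v \<Rightarrow> nat \<Rightarrow> 'v) \<Rightarrow> bool" where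
  "lie_conformal sc d br \<longleftrightarrow>
     cmodule sc d \<and> lbracket sc sc sc br \<and> sesquilinear d d d br \<and>
     (\<forall>a b. br a b = (\<lambda>i. - subst_mdl sc d (br b a) i)) \<and>
     (\<forall>a b c. nest_left br br a b c = (\<lambda>i j. nest_mid sc br br a b c i j + nest_right br br a b c i j))"

definition nijenhuis_op ::
  "(complex \<Rightarrow> 'v::ab_group_add \<Rightarrow> 'v) \<Rightarrow> ('v \<Rightarrow> 'v) \<Rightarrow> ('v \<Rightarrow> 'v \<Rightarrow> nat \<Rightarrow> 'v) \<Rightarrow> ('v \<Rightarrow> 'v) \<Rightarrow> bool" where
  "nijenhuis_op sc d br N \<longleftrightarrow>
     cd_linear sc d sc d N \<and>
     (\<forall>p q j. br (N p) (N q) j = N (br (N p) q j + br p (N q) j - N (br p q j)))"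

definition nijenhuis_lie_conformal ::
  "(complex \<Rightarrow> 'v::ab_group_add \<Rightarrow> 'v) \<Rightarrow> ('v \<Rightarrow> 'v) \<Rightarrow> ('v \<Rightarrow> 'v \<Rightarrow> nat \<Rightarrow> 'v) \<Rightarrow> ('v \<Rightarrow> 'v) \<Rightarrow> bool" where
  "nijenhuis_lie_conformal sc d br N \<longleftrightarrow> lie_conformal sc d br \<and> nijenhuis_op sc d br N"

text \<open>L0 has scalars s0 and derivation d0,
  L1 has s1, d1.  b00: L0 x L0 -> L0[lambda], b01: L0 x L1 -> L1[lambda],
  b10: L1 x L0 -> L1[lambda]; the bracket on L1 x L1 is zero (not part of the data).\<close>
definition strict_2term_nij_Linf ::
  "(complex \<Rightarrow> 'a::ab_group_add \<Rightarrow> 'a) \<Rightarrow> ('a \<Rightarrow> 'a) \<Rightarrow>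
   (complex \<Rightarrow> 'b::ab_group_add \<Rightarrow> 'b) \<Rightarrow> ('b \<Rightarrow> 'b) \<Rightarrow>
   ('b \<Rightarrow> 'a) \<Rightarrow> ('a \<Rightarrow> 'a \<Rightarrow> nat \<Rightarrow> 'a) \<Rightarrow> ('a \<Rightarrow> 'b \<Rightarrow> nat \<Rightarrow> 'b) \<Rightarrow> ('b \<Rightarrow> 'a \<Rightarrow> nat \<Rightarrow> 'b) \<Rightarrow>
   ('a \<Rightarrow> 'a) \<Rightarrow> ('b \<Rightarrow> 'b) \<Rightarrow> bool" where
  "strict_2term_nij_Linf s0 d0 s1 d1 t b00 b01 b10 N0 N1 \<longleftrightarrow>
     cmodule s0 d0 \<and> cmodule s1 d1 \<and>
     cd_linear s1 d1 s0 d0 t \<and>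
     lbracket s0 s0 s0 b00 \<and> sesquilinear d0 d0 d0 b00 \<and>
     lbracket s0 s1 s1 b01 \<and> sesquilinear d0 d1 d1 b01 \<and>
     lbracket s1 s0 s1 b10 \<and> sesquilinear d1 d0 d1 b10 \<and>
     cd_linear s0 d0 s0 d0 N0 \<and> cd_linear s1 d1 s1 d1 N1 \<and>
     (\<forall>p m. b01 p m = (\<lambda>i. - subst_mdl s1 d1 (b10 m p) i)) \<and>
     (\<forall>p q. b00 p q = (\<lambda>i. - subst_mdl s0 d0 (b00 q p) i)) \<and>
     (\<forall>p m i. t (b01 p m i) = b00 p (t m) i) \<and>
     (\<forall>m n i. b01 (t m) n i = b10 m (t n) i) \<and>
     (\<forall>p q r i j. nest_left b00 b00 p q r i j - nest_mid s0 b00 b00 p q r i j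
                  - nest_right b00 b00 p q r i j = 0) \<and>
     (\<forall>p q m i j. nest_left b01 b01 p q m i j - nest_mid s1 b01 b00 p q m i j
                  - nest_right b01 b01 p q m i j = 0) \<and>
     (\<forall>m. t (N1 m) = N0 (t m)) \<and>
     (\<forall>p q i. N0 (b00 (N0 p) q i + b00 p (N0 q) i - N0 (b00 p q i)) = b00 (N0 p) (N0 q) i) \<and>
     (\<forall>p m i. N1 (b01 (N0 p) m i + b01 p (N1 m) i - N1 (b01 p m i)) = b01 (N0 p) (N1 m) i)"

definition sum_scale :: "(complex \<Rightarrow> 'a \<Rightarrow> 'a) \<Rightarrow> (complex \<Rightarrow> 'b \<Rightarrow> 'b) \<Rightarrow> complex \<Rightarrow> 'a \<times> 'b \<Rightarrow> 'a \<times> 'b" where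
  "sum_scale s0 s1 c x = (s0 c (fst x), s1 c (snd x))"

definition sum_map :: "('a \<Rightarrow> 'a) \<Rightarrow> ('b \<Rightarrow> 'b) \<Rightarrow> 'a \<times> 'b \<Rightarrow> 'a \<times> 'b" where
  "sum_map f g x = (f (fst x), g (snd x))"

definition sum_bracket ::
  "(complex \<Rightarrow> 'b::ab_group_add \<Rightarrow> 'b) \<Rightarrow> ('b \<Rightarrow> 'b) \<Rightarrow> ('b \<Rightarrow> 'a) \<Rightarrow>
   ('a \<Rightarrow> 'a \<Rightarrow> nat \<Rightarrow> 'a) \<Rightarrow> ('a \<Rightarrow> 'b \<Rightarrow> nat \<Rightarrow> 'b) \<Rightarrow>
   'a \<times> 'b \<Rightarrow> 'a \<times> 'b \<Rightarrow> nat \<Rightarrow> 'a \<times> 'b" where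
  "sum_bracket s1 d1 t b00 b01 x y i =
     (b00 (fst x) (fst y) i,
      b01 (fst x) (snd y) i - subst_mdl s1 d1 (b01 (fst y) (snd x)) i + b01 (t (snd x)) (snd y) i)"

end

theory Submission
  imports Defs "HOL-Computational_Algebra.Polynomial"
begin

text \<open>The Jacobi identity is trilinear.  If the third argument lies in \<open>L\<^sub>1\<close> it is the Jacobi identity
  of the \<open>L\<^sub>0\<close>-module \<open>L\<^sub>1\<close> for \<open>p + t m\<close> and \<open>q + t n\<close>, because \<open>t\<close> is equivariant; on
  \<open>L\<^sub>0\<close> it is the Jacobi identity of \<open>L\<^sub>0\<close>; all other cases follow since, for a skew-symmetric
  bracket, the Jacobi identity is invariant under cyclic permutations of its arguments.
  This invariance is proved with generating functions: at \<open>\<lambda> := c, \<mu> := e\<close>, skew-symmetry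
  carries each term of the identity for \<open>(u, v, w)\<close> to a term of the identity for \<open>(w, u, v)\<close>,
  with \<open>\<lambda> := -\<partial> - c - e\<close> substituted; and a polynomial with vector coefficients is determined
  by its values at all complex numbers, which also shows that \<open>\<lambda> \<mapsto> -\<partial> - \<lambda>\<close> is an involution.\<close>

section \<open>Polynomials with coefficients in a \<open>\<complex>[\<partial>]\<close>-module\<close>

lemma linear_map_add: "Vector_Spaces.linear s1 s2 f \<Longrightarrow> f (x + y) = f x + f y"
  by (simp add: Vector_Spaces.linear_iff)

lemma linear_map_scale: "Vector_Spaces.linear s1 s2 f \<Longrightarrow> f (s1 c x) = s2 c (f x)"
  by (simp add: Vector_Spaces.linear_iff)

lemma linear_map_zero: "Vector_Spaces.linear s1 s2 f \<Longrightarrow> f 0 = 0"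
  unfolding linear_iff_module_hom by (rule module_hom.zero)

lemma linear_map_neg: "Vector_Spaces.linear s1 s2 f \<Longrightarrow> f (- x) = - f x"
  unfolding linear_iff_module_hom by (rule module_hom.neg)

lemma linear_map_diff: "Vector_Spaces.linear s1 s2 f \<Longrightarrow> f (x - y) = f x - f y"
  unfolding linear_iff_module_hom by (rule module_hom.diff)

lemma linear_map_sum: "Vector_Spaces.linear s1 s2 f \<Longrightarrow> f (sum g A) = (\<Sum>a\<in>A. f (g a))"
  unfolding linear_iff_module_hom by (rule module_hom.sum)

definition vanishes_above :: "(nat \<Rightarrow> 'v::zero) \<Rightarrow> nat \<Rightarrow> bool" where
  "vanishes_above p N \<longleftrightarrow> (\<forall>k>N. p k = 0)"

lemma vanishes_above_mono: "vanishes_above p N \<Longrightarrow> N \<le> M \<Longrightarrow> vanishes_above p M"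
  by (auto simp: vanishes_above_def)

lemma vanishes_above_support: "vanishes_above p N \<Longrightarrow> {k. p k \<noteq> 0} \<subseteq> {..N}"
  by (auto simp: vanishes_above_def not_less[symmetric])

lemma fin_poly_iff_vanishes_above: "fin_poly p \<longleftrightarrow> (\<exists>N. vanishes_above p N)"
proof
  assume "fin_poly p"
  then have "finite {k. p k \<noteq> 0}" by (simp add: fin_poly_def)
  then obtain N where "\<forall>k\<in>{k. p k \<noteq> 0}. k \<le> N"
    using finite_nat_set_iff_bounded_le by blast
  then have "vanishes_above p N" by (auto simp: vanishes_above_def)
  then show "\<exists>N. vanishes_above p N" ..
next
  assume "\<exists>N. vanishes_above p N"
  then show "fin_poly p"
    unfolding fin_poly_def by (metis finite_atMost finite_subset vanishes_above_support)
qed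

lemma fin_poly_vanishes_above_obtain:
  assumes "fin_poly p" obtains N where "vanishes_above p N"
  using assms fin_poly_iff_vanishes_above by blast

lemma fin_poly_add:
  fixes p q :: "nat \<Rightarrow> 'v::monoid_add"
  shows "fin_poly p \<Longrightarrow> fin_poly q \<Longrightarrow> fin_poly (\<lambda>k. p k + q k)"
  unfolding fin_poly_def
  by (rule finite_subset[of _ "{k. p k \<noteq> 0} \<union> {k. q k \<noteq> 0}"]) auto

lemma fin_poly_pair: "fin_poly p \<Longrightarrow> fin_poly q \<Longrightarrow> fin_poly (\<lambda>k. (p k, q k))"
  unfolding fin_poly_def
  by (rule finite_subset[of _ "{k. p k \<noteq> 0} \<union> {k. q k \<noteq> 0}"]) (auto simp: zero_prod_def)

lemma fin_poly_linear_image: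
  "Vector_Spaces.linear s1 s2 f \<Longrightarrow> fin_poly p \<Longrightarrow> fin_poly (\<lambda>k. f (p k))"
  unfolding fin_poly_def
  by (rule finite_subset[of _ "{k. p k \<noteq> 0}"]) (auto simp: linear_map_zero)

lemma minus_X_minus_pow_expand:
  fixes P :: "complex poly"
  assumes "k \<le> N"
  shows "(\<Sum>i\<le>N. smult ((-1) ^ k * of_nat (k choose i)) (P ^ i * [:0, 1:] ^ (k - i)))
         = (- [:0, 1:] - P) ^ k"
proof -
  have "(\<Sum>i\<le>N. smult ((-1) ^ k * of_nat (k choose i)) (P ^ i * [:0, 1:] ^ (k - i)))
      = (\<Sum>i\<le>k. smult ((-1) ^ k * of_nat (k choose i)) (P ^ i * [:0, 1:] ^ (k - i)))"
    by (rule sum.mono_neutral_right) (use assms in \<open>auto simp: binomial_eq_0 not_le\<close>)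
  also have "\<dots> = [:(-1) ^ k:] * (\<Sum>i\<le>k. of_nat (k choose i) * P ^ i * [:0, 1:] ^ (k - i))"
    by (simp add: sum_distrib_left of_nat_poly mult.assoc mult.commute)
  also have "\<dots> = [:(-1) ^ k:] * (P + [:0, 1:]) ^ k"
    by (simp add: binomial_ring)
  also have "\<dots> = (- [:0, 1:] - P) ^ k"
    by (induction k) (simp_all add: algebra_simps)
  finally show ?thesis .
qed

definition peval :: "(complex \<Rightarrow> 'v::ab_group_add \<Rightarrow> 'v) \<Rightarrow> (nat \<Rightarrow> 'v) \<Rightarrow> complex \<Rightarrow> 'v" where
  "peval sc p c = (\<Sum>k\<in>{k. p k \<noteq> 0}. sc (c ^ k) (p k))"

locale cd_module =
  fixes sc :: "complex \<Rightarrow> 'v::ab_group_add \<Rightarrow> 'v" and d :: "'v \<Rightarrow> 'v"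
  assumes vector_space: "vector_space sc" and d_linear: "Vector_Spaces.linear sc sc d"
begin

sublocale V: vector_space sc by (rule vector_space)

lemma d_add: "d (v + w) = d v + d w"
  using linear_map_add[OF d_linear] .

lemma d_zero [simp]: "d 0 = 0"
  using linear_map_zero[OF d_linear] .

lemma d_pow_linear: "Vector_Spaces.linear sc sc (d ^^ n)"
proof (induction n)
  case 0
  then show ?case using V.linear_id by (simp add: id_def)
next
  case (Suc n)
  then show ?case using Vector_Spaces.linear_compose[OF Suc d_linear] by (simp add: o_def)
qed

lemma peval_superset:
  assumes "finite S" "{k. p k \<noteq> 0} \<subseteq> S"
  shows "peval sc p c = (\<Sum>k\<in>S. sc (c ^ k) (p k))"
  unfolding peval_def by (rule sum.mono_neutral_left[OF assms]) auto

lemma peval_vanishes_above: "vanishes_above p N \<Longrightarrow> peval sc p c = (\<Sum>k\<le>N. sc (c ^ k) (p k))"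
  by (rule peval_superset) (auto dest: vanishes_above_support)

definition poly_act :: "complex poly \<Rightarrow> 'v \<Rightarrow> 'v" where
  "poly_act P v = (\<Sum>k\<le>degree P. sc (coeff P k) ((d ^^ k) v))"

lemma poly_act_pCons: "poly_act (pCons a P) v = sc a v + d (poly_act P v)"
proof -
  have "poly_act (pCons a P) v = (\<Sum>k\<le>Suc (degree P). sc (coeff (pCons a P) k) ((d ^^ k) v))"
    unfolding poly_act_def
    by (rule sum.mono_neutral_left) (auto simp: coeff_eq_0 degree_pCons_le intro: le_trans)
  also have "\<dots> = sc a v + (\<Sum>k\<le>degree P. sc (coeff P k) ((d ^^ Suc k) v))"
    by (subst sum.atMost_Suc_shift) simp
  also have "(\<Sum>k\<le>degree P. sc (coeff P k) ((d ^^ Suc k) v)) = d (poly_act P v)"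
    unfolding poly_act_def linear_map_sum[OF d_linear] by (simp add: linear_map_scale[OF d_linear])
  finally show ?thesis .
qed

lemma poly_act_0 [simp]: "poly_act 0 v = 0"
  by (simp add: poly_act_def)

lemma poly_act_linear: "Vector_Spaces.linear sc sc (poly_act P)"
proof (induction P)
  case 0
  then show ?case unfolding Vector_Spaces.linear_iff by (simp add: vector_space)
next
  case (pCons a P)
  then show ?case using d_linear unfolding Vector_Spaces.linear_iff poly_act_pCons
    by (simp add: algebra_simps)
qed

lemma poly_act_zero [simp]: "poly_act P 0 = 0"
  using linear_map_zero[OF poly_act_linear] .

lemma poly_act_add: "poly_act (P + Q) v = poly_act P v + poly_act Q v"
proof (induction P arbitrary: Q)
  case 0
  then show ?case by simp
next
  case (pCons a P)
  then show ?case
    by (cases Q rule: pCons_cases) (simp add: poly_act_pCons d_add algebra_simps)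
qed

lemma poly_act_smult: "poly_act (smult a P) v = sc a (poly_act P v)"
  by (induction P)
     (simp_all add: poly_act_pCons V.scale_right_distrib linear_map_scale[OF d_linear])

lemma poly_act_const [simp]: "poly_act [:a:] v = sc a v"
  by (simp add: poly_act_pCons)

lemma poly_act_mult: "poly_act (P * Q) v = poly_act P (poly_act Q v)"
  by (induction P) (simp_all add: poly_act_add poly_act_smult poly_act_pCons)

lemma poly_act_sum: "finite A \<Longrightarrow> poly_act (sum P A) v = (\<Sum>a\<in>A. poly_act (P a) v)"
  by (induction A rule: finite_induct) (simp_all add: poly_act_add)

lemma poly_act_X_pow: "poly_act ([:0, 1:] ^ n) v = (d ^^ n) v"
  by (induction n) (simp_all add: poly_act_mult poly_act_pCons one_pCons)

lemma poly_act_const_pow: "poly_act ([:a:] ^ n) v = sc (a ^ n) v"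
  by (simp add: poly_const_pow)

lemma peval_add:
  assumes "fin_poly p" "fin_poly q"
  shows "peval sc (\<lambda>k. p k + q k) c = peval sc p c + peval sc q c"
proof -
  let ?S = "{k. p k \<noteq> 0} \<union> {k. q k \<noteq> 0}"
  have S: "finite ?S" using assms by (simp add: fin_poly_def)
  have "peval sc (\<lambda>k. p k + q k) c = (\<Sum>k\<in>?S. sc (c ^ k) (p k) + sc (c ^ k) (q k))"
    by (subst peval_superset[OF S]) (auto simp: V.scale_right_distrib)
  also have "\<dots> = peval sc p c + peval sc q c"
    by (simp add: sum.distrib peval_superset[OF S])
  finally show ?thesis .
qed

lemma peval_linear_image:
  assumes f: "Vector_Spaces.linear s1 sc f" and p: "fin_poly p"
  shows "peval sc (\<lambda>k. f (p k)) c = f (peval s1 p c)"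
proof -
  let ?S = "{k. p k \<noteq> 0}"
  have S: "finite ?S" using p by (simp add: fin_poly_def)
  have "peval sc (\<lambda>k. f (p k)) c = (\<Sum>k\<in>?S. sc (c ^ k) (f (p k)))"
    by (rule peval_superset[OF S]) (auto simp: linear_map_zero[OF f])
  then show ?thesis
    by (simp add: peval_def linear_map_sum[OF f] linear_map_scale[OF f])
qed

lemma peval_eq_0_imp_coeff_eq_0:
  assumes "\<forall>c. c \<noteq> 0 \<longrightarrow> (\<Sum>k\<le>N. sc (c ^ k) (p k)) = 0" and "k \<le> N"
  shows "p k = 0"
  using assms
proof (induction N arbitrary: p k)
  case 0
  then show ?case using spec[OF "0.prems"(1), of 1] by simp
next
  case (Suc N)
  \<comment> \<open>\<open>P(2c) - 2\<^sup>N\<^sup>+\<^sup>1 P(c)\<close>, where \<open>P(c) = \<Sum>\<^sub>k c\<^sup>k p\<^sub>k\<close>, has degree at most \<open>N\<close> and coefficients \<open>q k\<close>.\<close>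
  define q where "q k = sc (2 ^ k - 2 ^ Suc N) (p k)" for k
  have "(\<Sum>k\<le>N. sc (c ^ k) (q k)) = 0" if "c \<noteq> 0" for c :: complex
  proof -
    have "(\<Sum>k\<le>N. sc (c ^ k) (q k)) = (\<Sum>k\<le>Suc N. sc (c ^ k) (q k))"
      by (simp add: q_def)
    also have "\<dots> = (\<Sum>k\<le>Suc N. sc ((2 * c) ^ k) (p k)) - sc (2 ^ Suc N) (\<Sum>k\<le>Suc N. sc (c ^ k) (p k))"
      by (simp add: q_def V.scale_sum_right sum_subtractf[symmetric] algebra_simps
          flip: V.scale_left_diff_distrib)
    also have "\<dots> = 0"
    proof -
      have "2 * c \<noteq> 0" using that by simp
      then have "(\<Sum>k\<le>Suc N. sc ((2 * c) ^ k) (p k)) = 0" "(\<Sum>k\<le>Suc N. sc (c ^ k) (p k)) = 0"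
        using Suc.prems(1) that by blast+
      then show ?thesis by simp
    qed
    finally show ?thesis .
  qed
  then have "q k = 0" if "k \<le> N" for k
    using Suc.IH that by blast
  moreover have "(2::complex) ^ k \<noteq> 2 ^ Suc N" if "k \<le> N" for k
  proof -
    have "(2::nat) ^ k < 2 ^ Suc N" using that by (intro power_strict_increasing) auto
    then have "of_nat (2 ^ k) \<noteq> (of_nat (2 ^ Suc N) :: complex)" by (simp only: of_nat_eq_iff)
    then show ?thesis by simp
  qed
  ultimately have low: "p k = 0" if "k \<le> N" for k
    using that by (simp add: q_def)
  then have "p (Suc N) = 0"
    using spec[OF Suc.prems(1), of 1] by simp
  with low Suc.prems(2) show ?case
    by (cases "k = Suc N") auto
qed

lemma peval_eq_0_imp_eq_0:
  assumes p: "fin_poly p" and zero: "\<And>c. peval sc p c = 0"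
  shows "p = (\<lambda>k. 0)"
proof
  fix k
  obtain N where N: "vanishes_above p N" using p fin_poly_vanishes_above_obtain by blast
  show "p k = 0"
  proof (cases "k \<le> N")
    case True
    then show ?thesis
      using peval_eq_0_imp_coeff_eq_0[where N = N and p = p and k = k] zero
      by (simp add: peval_vanishes_above[OF N])
  qed (use N in \<open>simp add: vanishes_above_def\<close>)
qed

lemma peval_inject:
  assumes p: "fin_poly p" and q: "fin_poly q" and eq: "\<And>c. peval sc p c = peval sc q c"
  shows "p = q"
proof -
  have mq: "fin_poly (\<lambda>k. - q k)" using q by (simp add: fin_poly_def)
  have "peval sc (\<lambda>k. - q k) c = - peval sc q c" for c
    by (simp add: peval_def sum_negf)
  then have "peval sc (\<lambda>k. p k + - q k) c = 0" for c
    unfolding peval_add[OF p mq] by (simp add: eq)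
  then have "(\<lambda>k. p k + - q k) = (\<lambda>k. 0)"
    by (intro peval_eq_0_imp_eq_0 fin_poly_add p mq)
  then show ?thesis by (auto simp: fun_eq_iff dest: fun_cong)
qed

lemma subst_mdl_superset:
  assumes "finite S" "{k. p k \<noteq> 0} \<subseteq> S"
  shows "subst_mdl sc d p i = (\<Sum>k\<in>S. sc ((-1) ^ k * of_nat (k choose i)) ((d ^^ (k - i)) (p k)))"
  unfolding subst_mdl_def
  by (rule sum.mono_neutral_left) (use assms in \<open>auto simp: linear_map_zero[OF d_pow_linear]\<close>)

lemma subst_mdl_vanishes_above_eq:
  "vanishes_above p N \<Longrightarrow>
   subst_mdl sc d p i = (\<Sum>k\<le>N. sc ((-1) ^ k * of_nat (k choose i)) ((d ^^ (k - i)) (p k)))"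
  by (rule subst_mdl_superset) (auto dest: vanishes_above_support)

lemma subst_mdl_vanishes_above: "vanishes_above p N \<Longrightarrow> vanishes_above (subst_mdl sc d p) N"
  by (auto simp: vanishes_above_def subst_mdl_vanishes_above_eq intro!: sum.neutral)

lemma fin_poly_subst_mdl: "fin_poly p \<Longrightarrow> fin_poly (subst_mdl sc d p)"
  using subst_mdl_vanishes_above fin_poly_iff_vanishes_above by blast

lemma subst_mdl_add:
  assumes "fin_poly p" "fin_poly q"
  shows "subst_mdl sc d (\<lambda>k. p k + q k) i = subst_mdl sc d p i + subst_mdl sc d q i"
proof -
  let ?S = "{k. p k \<noteq> 0} \<union> {k. q k \<noteq> 0}"
  have S: "finite ?S" using assms by (simp add: fin_poly_def)
  show ?thesis
    by (subst (1 2 3) subst_mdl_superset[OF S])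
       (auto simp: linear_map_add[OF d_pow_linear] V.scale_right_distrib sum.distrib)
qed

lemma subst_mdl_neg: "subst_mdl sc d (\<lambda>k. - p k) i = - subst_mdl sc d p i"
  unfolding subst_mdl_def by (simp add: linear_map_neg[OF d_pow_linear] sum_negf)

lemma subst_mdl_diff:
  assumes "fin_poly p" "fin_poly q"
  shows "subst_mdl sc d (\<lambda>k. p k - q k) i = subst_mdl sc d p i - subst_mdl sc d q i"
proof -
  have "fin_poly (\<lambda>k. - q k)" using assms(2) by (simp add: fin_poly_def)
  then show ?thesis
    using subst_mdl_add[OF assms(1), of "\<lambda>k. - q k" i] subst_mdl_neg[of q i] by simp
qed

definition peval_op :: "(nat \<Rightarrow> 'v) \<Rightarrow> complex poly \<Rightarrow> 'v" where
  "peval_op p P = (\<Sum>k\<in>{k. p k \<noteq> 0}. poly_act (P ^ k) (p k))"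

lemma peval_op_superset:
  assumes "finite S" "{k. p k \<noteq> 0} \<subseteq> S"
  shows "peval_op p P = (\<Sum>k\<in>S. poly_act (P ^ k) (p k))"
  unfolding peval_op_def
  by (rule sum.mono_neutral_left[OF assms]) (auto simp: linear_map_zero[OF poly_act_linear])

lemma peval_op_vanishes_above:
  "vanishes_above p N \<Longrightarrow> peval_op p P = (\<Sum>k\<le>N. poly_act (P ^ k) (p k))"
  by (rule peval_op_superset) (auto dest: vanishes_above_support)

lemma peval_op_const: "peval_op p [:c:] = peval sc p c"
  unfolding peval_op_def peval_def by (simp add: poly_act_const_pow)

lemma peval_op_subst_mdl:
  assumes "fin_poly p"
  shows "peval_op (subst_mdl sc d p) P = peval_op p (- [:0, 1:] - P)"
proof -
  obtain N where N: "vanishes_above p N" using assms fin_poly_vanishes_above_obtain by blast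
  let ?c = "\<lambda>k i. (-1) ^ k * of_nat (k choose i) :: complex"
  have "peval_op (subst_mdl sc d p) P = (\<Sum>i\<le>N. poly_act (P ^ i) (subst_mdl sc d p i))"
    by (rule peval_op_vanishes_above[OF subst_mdl_vanishes_above[OF N]])
  also have "\<dots> = (\<Sum>i\<le>N. \<Sum>k\<le>N. poly_act (smult (?c k i) (P ^ i * [:0, 1:] ^ (k - i))) (p k))"
    unfolding subst_mdl_vanishes_above_eq[OF N] linear_map_sum[OF poly_act_linear]
    by (simp add: poly_act_mult poly_act_X_pow poly_act_smult linear_map_scale[OF poly_act_linear])
  also have "\<dots> = (\<Sum>k\<le>N. poly_act (\<Sum>i\<le>N. smult (?c k i) (P ^ i * [:0, 1:] ^ (k - i))) (p k))"
    by (subst sum.swap) (simp add: poly_act_sum)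
  also have "\<dots> = (\<Sum>k\<le>N. poly_act ((- [:0, 1:] - P) ^ k) (p k))"
    by (simp add: minus_X_minus_pow_expand)
  also have "\<dots> = peval_op p (- [:0, 1:] - P)"
    by (rule peval_op_vanishes_above[OF N, symmetric])
  finally show ?thesis .
qed

lemma subst_mdl_involutive:
  assumes "fin_poly p"
  shows "subst_mdl sc d (subst_mdl sc d p) = p"
proof (rule peval_inject)
  show "fin_poly (subst_mdl sc d (subst_mdl sc d p))"
    by (intro fin_poly_subst_mdl assms)
  show "peval sc (subst_mdl sc d (subst_mdl sc d p)) c = peval sc p c" for c
    using assms
    by (simp add: peval_op_const[symmetric] peval_op_subst_mdl fin_poly_subst_mdl del: pCons_0_0)
qed (rule assms)

end

lemma cd_linear_subst_mdl:
  assumes "cd_module s1 d1" "cd_module s2 d2" and f: "cd_linear s1 d1 s2 d2 f" and p: "fin_poly p"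
  shows "f (subst_mdl s1 d1 p i) = subst_mdl s2 d2 (\<lambda>k. f (p k)) i"
proof -
  interpret M1: cd_module s1 d1 by fact
  interpret M2: cd_module s2 d2 by fact
  have lin: "Vector_Spaces.linear s1 s2 f" and fd: "\<And>a. f (d1 a) = d2 (f a)"
    using f by (auto simp: cd_linear_def)
  have f_pow: "f ((d1 ^^ n) v) = (d2 ^^ n) (f v)" for n v
    by (induction n) (simp_all add: fd)
  have "subst_mdl s2 d2 (\<lambda>k. f (p k)) i
      = (\<Sum>k\<in>{k. p k \<noteq> 0}. s2 ((-1) ^ k * of_nat (k choose i)) ((d2 ^^ (k - i)) (f (p k))))"
    using p by (intro M2.subst_mdl_superset) (auto simp: fin_poly_def linear_map_zero[OF lin])
  also have "\<dots> = f (subst_mdl s1 d1 p i)"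
    unfolding subst_mdl_def linear_map_sum[OF lin] by (simp add: linear_map_scale[OF lin] f_pow)
  finally show ?thesis by simp
qed

section \<open>Polynomials in two variables\<close>

definition vanishes_above2 :: "(nat \<Rightarrow> nat \<Rightarrow> 'v::zero) \<Rightarrow> nat \<Rightarrow> bool" where
  "vanishes_above2 F N \<longleftrightarrow> (\<forall>i j. N < i \<or> N < j \<longrightarrow> F i j = 0)"

lemma vanishes_above2_mono: "vanishes_above2 F N \<Longrightarrow> N \<le> M \<Longrightarrow> vanishes_above2 F M"
  by (auto simp: vanishes_above2_def)

lemma vanishes_above2_swap: "vanishes_above2 F N \<Longrightarrow> vanishes_above2 (\<lambda>i j. F j i) N"
  by (auto simp: vanishes_above2_def)

lemma vanishes_above2_row: "vanishes_above2 F N \<Longrightarrow> vanishes_above (F i) N"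
  by (auto simp: vanishes_above2_def vanishes_above_def)

lemma vanishes_above2_column: "vanishes_above2 F N \<Longrightarrow> vanishes_above (\<lambda>i. F i j) N"
  by (auto simp: vanishes_above2_def vanishes_above_def)

lemma vanishes_above2_nested:
  assumes g: "fin_poly g" and B: "\<And>w. fin_poly (B w)" and B0: "\<And>i. B 0 i = 0"
  shows "\<exists>N. vanishes_above2 (\<lambda>i j. B (g j) i) N"
proof -
  obtain Ng where Ng: "vanishes_above g Ng" using g fin_poly_vanishes_above_obtain by blast
  have "\<forall>j. \<exists>n. vanishes_above (B (g j)) n" using B fin_poly_iff_vanishes_above by blast
  then obtain n where n: "\<And>j. vanishes_above (B (g j)) (n j)" by metis
  have "vanishes_above2 (\<lambda>i j. B (g j) i) (Ng + (\<Sum>j\<le>Ng. n j))"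
    unfolding vanishes_above2_def
  proof (intro allI impI)
    fix i j assume big: "Ng + (\<Sum>j\<le>Ng. n j) < i \<or> Ng + (\<Sum>j\<le>Ng. n j) < j"
    show "B (g j) i = 0"
    proof (cases "Ng < j")
      case True
      then show ?thesis using Ng B0 by (simp add: vanishes_above_def)
    next
      case False
      then have "n j \<le> (\<Sum>j\<le>Ng. n j)" by (intro member_le_sum) auto
      then show ?thesis using n[of j] big False by (simp add: vanishes_above_def)
    qed
  qed
  then show ?thesis ..
qed

text \<open>\<open>shift_expand sc f i j\<close> is the coefficient of \<open>\<lambda>\<^sup>i \<mu>\<^sup>j\<close> in
  \<open>\<Sum>\<^sub>k\<^sub>,\<^sub>l \<lambda>\<^sup>k (\<lambda> + \<mu>)\<^sup>l f k l\<close>.\<close>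

definition shift_expand ::
  "(complex \<Rightarrow> 'v::ab_group_add \<Rightarrow> 'v) \<Rightarrow> (nat \<Rightarrow> nat \<Rightarrow> 'v) \<Rightarrow> nat \<Rightarrow> nat \<Rightarrow> 'v" where
  "shift_expand sc f i j = (\<Sum>l\<in>{j..i+j}. sc (of_nat (l choose j)) (f (i + j - l) l))"

lemma nest_mid_eq_shift_expand:
  "nest_mid sc B1 B2 a b c = shift_expand sc (\<lambda>k l. B1 (B2 a b k) c l)"
  unfolding nest_mid_def[abs_def] shift_expand_def[abs_def] ..

definition peval2 ::
  "(complex \<Rightarrow> 'v::ab_group_add \<Rightarrow> 'v) \<Rightarrow> (nat \<Rightarrow> nat \<Rightarrow> 'v) \<Rightarrow> complex \<Rightarrow> complex \<Rightarrow> 'v" where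
  "peval2 sc F c e = peval sc (\<lambda>i. peval sc (F i) e) c"

context cd_module
begin

lemma shift_expand_zero [simp]: "shift_expand sc (\<lambda>k l. 0) i j = 0"
  unfolding shift_expand_def by simp

lemma shift_expand_vanishes_above2:
  assumes "vanishes_above2 f N"
  shows "vanishes_above2 (shift_expand sc f) (2 * N)"
  unfolding vanishes_above2_def shift_expand_def
proof (intro allI impI sum.neutral ballI)
  fix i j l assume "2 * N < i \<or> 2 * N < j" "l \<in> {j..i+j}"
  then have "N < i + j - l \<or> N < l" by auto
  then have "f (i + j - l) l = 0"
    using assms by (auto simp: vanishes_above2_def)
  then show "sc (of_nat (l choose j)) (f (i + j - l) l) = 0" by simp
qed

lemma vanishes_above2_peval_rows:
  "vanishes_above2 F N \<Longrightarrow> vanishes_above (\<lambda>i. peval sc (F i) e) N"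
  by (simp add: vanishes_above_def vanishes_above2_def peval_def)

lemma peval2_vanishes_above2:
  assumes "vanishes_above2 F N"
  shows "peval2 sc F c e = (\<Sum>i\<le>N. sc (c ^ i) (\<Sum>j\<le>N. sc (e ^ j) (F i j)))"
  unfolding peval2_def peval_vanishes_above[OF vanishes_above2_peval_rows[OF assms]]
  by (simp add: peval_vanishes_above[OF vanishes_above2_row[OF assms]])

lemma peval2_eq_0_imp_eq_0:
  assumes F: "vanishes_above2 F N" and zero: "\<And>c e. peval2 sc F c e = 0"
  shows "F i j = 0"
proof -
  have "(\<lambda>i. peval sc (F i) e) = (\<lambda>i. 0)" for e
  proof (rule peval_eq_0_imp_eq_0)
    show "fin_poly (\<lambda>i. peval sc (F i) e)"
      using vanishes_above2_peval_rows[OF F] fin_poly_iff_vanishes_above by blast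
  qed (use zero in \<open>simp add: peval2_def\<close>)
  then have "F i = (\<lambda>j. 0)"
    using vanishes_above2_row[OF F] fin_poly_iff_vanishes_above
    by (metis peval_eq_0_imp_eq_0)
  then show ?thesis by simp
qed

lemma poly_act_mult_shift_pow:
  "poly_act (P ^ k * (P + [:c:]) ^ l) v
   = (\<Sum>j\<le>l. sc (of_nat (l choose j) * c ^ j) (poly_act (P ^ (k + l - j)) v))"
proof -
  have "P ^ k * (P + [:c:]) ^ l = (\<Sum>j\<le>l. smult (of_nat (l choose j) * c ^ j) (P ^ (k + l - j)))"
    unfolding binomial_ring[of "[:c:]" P l, unfolded add.commute[of "[:c:]"]]
    by (simp add: sum_distrib_left of_nat_poly poly_const_pow power_add[symmetric] mult.commute
        mult.left_commute)
  then show ?thesis by (simp add: poly_act_sum poly_act_smult)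
qed

lemma peval_op_shift_expand:
  assumes f: "vanishes_above2 f N"
  shows "peval_op (\<lambda>i. peval sc (shift_expand sc f i) c) P
       = (\<Sum>k\<le>N. \<Sum>l\<le>N. poly_act (P ^ k * (P + [:c:]) ^ l) (f k l))"
proof -
  have M: "vanishes_above2 (shift_expand sc f) (2 * N)"
    by (rule shift_expand_vanishes_above2[OF f])
  define h where "h = (\<lambda>(i, j, l).
    sc (of_nat (l choose j) * c ^ j) (poly_act (P ^ i) (f (i + j - l) l)))"
  define g where "g = (\<lambda>(k, l, j).
    sc (of_nat (l choose j) * c ^ j) (poly_act (P ^ (k + l - j)) (f k l)))"
  define A where "A = Sigma {..2 * N} (\<lambda>i. Sigma {..2 * N} (\<lambda>j. {j..i+j}))"
  define A' where "A' = {(i, j, l) \<in> A. i + j - l \<le> N \<and> l \<le> N}"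
  define B where "B = Sigma {..N} (\<lambda>k. Sigma {..N} (\<lambda>l. {..l}))"
  have "peval_op (\<lambda>i. peval sc (shift_expand sc f i) c) P
      = (\<Sum>i\<le>2 * N. poly_act (P ^ i) (peval sc (shift_expand sc f i) c))"
    by (rule peval_op_vanishes_above[OF vanishes_above2_peval_rows[OF M]])
  also have "\<dots> = (\<Sum>i\<le>2 * N. \<Sum>j\<le>2 * N. \<Sum>l\<in>{j..i+j}. h (i, j, l))"
    unfolding peval_vanishes_above[OF vanishes_above2_row[OF M]] shift_expand_def h_def
      linear_map_sum[OF poly_act_linear] V.scale_sum_right
    by (simp add: linear_map_scale[OF poly_act_linear] mult.commute)
  also have "\<dots> = sum h A"
    unfolding A_def by (simp add: sum.Sigma)
  also have "\<dots> = sum h A'"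
  proof (rule sum.mono_neutral_right)
    show "\<forall>x\<in>A - A'. h x = 0"
    proof
      fix x assume x_in: "x \<in> A - A'"
      obtain i j l where x: "x = (i, j, l)" by (cases x)
      have "N < i + j - l \<or> N < l" using x_in by (auto simp: A'_def x)
      then have "f (i + j - l) l = 0" using f by (auto simp: vanishes_above2_def)
      then show "h x = 0" by (simp add: x h_def)
    qed
  qed (auto simp: A_def A'_def)
  also have "\<dots> = sum g B"
  proof (rule sum.reindex_bij_witness[where i = "\<lambda>(k, l, j). (k + l - j, j, l)"
        and j = "\<lambda>(i, j, l). (i + j - l, l, j)"])
  qed (auto simp: A_def A'_def B_def g_def h_def)
  also have "\<dots> = (\<Sum>k\<le>N. \<Sum>l\<le>N. \<Sum>j\<le>l. g (k, l, j))"
    unfolding B_def by (simp add: sum.Sigma)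
  also have "\<dots> = (\<Sum>k\<le>N. \<Sum>l\<le>N. poly_act (P ^ k * (P + [:c:]) ^ l) (f k l))"
    unfolding poly_act_mult_shift_pow g_def by simp
  finally show ?thesis .
qed

lemma peval_op_add:
  assumes "fin_poly p" "fin_poly q"
  shows "peval_op (\<lambda>k. p k + q k) P = peval_op p P + peval_op q P"
proof -
  let ?S = "{k. p k \<noteq> 0} \<union> {k. q k \<noteq> 0}"
  have S: "finite ?S" using assms by (simp add: fin_poly_def)
  show ?thesis
    by (subst (1 2 3) peval_op_superset[OF S])
       (auto simp: linear_map_add[OF poly_act_linear] sum.distrib)
qed

lemma peval2_diff:
  assumes "vanishes_above2 F N" "vanishes_above2 G N"
  shows "peval2 sc (\<lambda>i j. F i j - G i j) c e = peval2 sc F c e - peval2 sc G c e"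
proof -
  have "vanishes_above2 (\<lambda>i j. F i j - G i j) N"
    using assms by (simp add: vanishes_above2_def)
  then show ?thesis
    using assms
    by (simp add: peval2_vanishes_above2 V.scale_right_diff_distrib sum_subtractf)
qed

end

section \<open>Cyclic invariance of the Jacobi identity\<close>

lemma pcompose_power: "(p ^ n) \<circ>\<^sub>p q = (p \<circ>\<^sub>p q) ^ n"
  by (induction n) (simp_all add: pcompose_mult pcompose_1)

lemma pcompose_minus_X_minus_const_power:
  fixes c e :: complex
  shows "((- [:0, 1:] - [:e:]) ^ k) \<circ>\<^sub>p [:c, 1:] = (- [:0, 1:] - [:c + e:]) ^ k"
  by (simp add: pcompose_power pcompose_diff pcompose_uminus pcompose_pCons algebra_simps)

locale conformal_bracket =
  fixes s1 :: "complex \<Rightarrow> 'a::ab_group_add \<Rightarrow> 'a" and d1 :: "'a \<Rightarrow> 'a"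
    and s2 :: "complex \<Rightarrow> 'b::ab_group_add \<Rightarrow> 'b" and d2 :: "'b \<Rightarrow> 'b"
    and s3 :: "complex \<Rightarrow> 'c::ab_group_add \<Rightarrow> 'c" and d3 :: "'c \<Rightarrow> 'c"
    and br :: "'a \<Rightarrow> 'b \<Rightarrow> nat \<Rightarrow> 'c"
  assumes lbracket: "lbracket s1 s2 s3 br" and sesquilinear: "sesquilinear d1 d2 d3 br"
begin

lemma fin_poly_bracket: "fin_poly (br a b)"
  using lbracket by (simp add: lbracket_def)

lemma linear_left: "Vector_Spaces.linear s1 s3 (\<lambda>a. br a b j)"
  using lbracket by (simp add: lbracket_def)

lemma linear_right: "Vector_Spaces.linear s2 s3 (\<lambda>b. br a b j)"
  using lbracket by (simp add: lbracket_def)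

lemma add_left: "br (a + a') b j = br a b j + br a' b j"
  using linear_map_add[OF linear_left] .

lemma add_right: "br a (b + b') j = br a b j + br a b' j"
  using linear_map_add[OF linear_right] .

lemma scale_left: "br (s1 c a) b j = s3 c (br a b j)"
  using linear_map_scale[OF linear_left] .

lemma scale_right: "br a (s2 c b) j = s3 c (br a b j)"
  using linear_map_scale[OF linear_right] .

lemma zero_left [simp]: "br 0 b j = 0"
  using linear_map_zero[OF linear_left] .

lemma zero_right [simp]: "br a 0 j = 0"
  using linear_map_zero[OF linear_right] .

lemma d_left: "br (d1 a) b j = - (if j = 0 then 0 else br a b (j - 1))"
  using sesquilinear by (simp add: sesquilinear_def)

lemma d_right: "br a (d2 b) j = d3 (br a b j) + (if j = 0 then 0 else br a b (j - 1))"
  using sesquilinear by (simp add: sesquilinear_def)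

end

locale skew_conformal_algebra =
  cd_module sc d + conformal_bracket sc d sc d sc d br
  for sc :: "complex \<Rightarrow> 'v::ab_group_add \<Rightarrow> 'v" and d and br +
  assumes skew: "br a b = (\<lambda>i. - subst_mdl sc d (br b a) i)"
begin

definition bracket_at :: "'v \<Rightarrow> 'v \<Rightarrow> complex \<Rightarrow> 'v" where
  "bracket_at a b c = peval sc (br a b) c"

lemma peval_bracket_right:
  "fin_poly p \<Longrightarrow> peval sc (\<lambda>j. br a (p j) i) c = br a (peval sc p c) i"
  by (rule peval_linear_image[OF linear_right])

lemma bracket_at_linear: "Vector_Spaces.linear sc sc (\<lambda>b. bracket_at a b c)"
proof (unfold Vector_Spaces.linear_iff, intro conjI allI)
  fix x y
  show "bracket_at a (x + y) c = bracket_at a x c + bracket_at a y c"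
    unfolding bracket_at_def add_right by (intro peval_add fin_poly_bracket)
next
  fix t x
  show "bracket_at a (sc t x) c = sc t (bracket_at a x c)"
    unfolding bracket_at_def scale_right
    by (intro peval_linear_image[OF V.linear_scale_self] fin_poly_bracket)
qed (simp_all add: vector_space)

lemma bracket_at_d: "bracket_at a (d w) c = poly_act [:c, 1:] (bracket_at a w c)"
proof -
  obtain N where N: "vanishes_above (br a w) N"
    using fin_poly_bracket fin_poly_vanishes_above_obtain by blast
  then have N': "vanishes_above (br a w) (Suc N)" "vanishes_above (br a (d w)) (Suc N)"
    by (auto simp: vanishes_above_def d_right)
  have "bracket_at a (d w) c
      = (\<Sum>j\<le>Suc N. sc (c ^ j) (d (br a w j)))
        + (\<Sum>j\<le>Suc N. sc (c ^ j) (if j = 0 then 0 else br a w (j - 1)))"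
    unfolding bracket_at_def peval_vanishes_above[OF N'(2)] d_right
    by (simp add: V.scale_right_distrib sum.distrib)
  also have "(\<Sum>j\<le>Suc N. sc (c ^ j) (d (br a w j))) = d (bracket_at a w c)"
    unfolding bracket_at_def peval_vanishes_above[OF N'(1)] linear_map_sum[OF d_linear]
    by (simp add: linear_map_scale[OF d_linear])
  also have "(\<Sum>j\<le>Suc N. sc (c ^ j) (if j = 0 then 0 else br a w (j - 1))) = sc c (bracket_at a w c)"
    unfolding bracket_at_def peval_vanishes_above[OF N] V.scale_sum_right
    by (subst sum.atMost_Suc_shift) simp
  finally show ?thesis by (simp add: poly_act_pCons add.commute)
qed

lemma bracket_at_poly_act:
  "bracket_at a (poly_act P w) c = poly_act (P \<circ>\<^sub>p [:c, 1:]) (bracket_at a w c)"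
proof (induction P)
  case 0
  then show ?case by (simp add: linear_map_zero[OF bracket_at_linear])
next
  case (pCons e P)
  have "bracket_at a (poly_act (pCons e P) w) c
      = sc e (bracket_at a w c) + poly_act [:c, 1:] (bracket_at a (poly_act P w) c)"
    by (simp add: poly_act_pCons linear_map_add[OF bracket_at_linear]
        linear_map_scale[OF bracket_at_linear] bracket_at_d)
  then show ?case
    by (simp only: pCons.IH pcompose_pCons poly_act_add poly_act_mult poly_act_const)
qed

lemma bracket_at_skew: "bracket_at a b c = - peval_op (br b a) (- [:0, 1:] - [:c:])"
proof -
  have "bracket_at a b c = - peval sc (subst_mdl sc d (br b a)) c"
    unfolding bracket_at_def by (subst skew) (simp add: peval_def sum_negf)
  also have "\<dots> = - peval_op (br b a) (- [:0, 1:] - [:c:])"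
    by (simp add: peval_op_const[symmetric] peval_op_subst_mdl fin_poly_bracket del: pCons_0_0)
  finally show ?thesis .
qed

lemma nested_right_vanishes_above2: "\<exists>N. vanishes_above2 (\<lambda>i j. br u (br v w j) i) N"
  by (rule vanishes_above2_nested[OF fin_poly_bracket fin_poly_bracket]) simp

lemma nested_left_vanishes_above2: "\<exists>N. vanishes_above2 (\<lambda>k l. br (br u v k) w l) N"
proof -
  obtain N where "vanishes_above2 (\<lambda>i j. br (br u v j) w i) N"
    using vanishes_above2_nested[OF fin_poly_bracket, of "\<lambda>a. br a w" u v] fin_poly_bracket by auto
  then show ?thesis using vanishes_above2_swap by fastforce
qed

lemma nest_left_vanishes_above2: "\<exists>N. vanishes_above2 (nest_left br br u v w) N"
  unfolding nest_left_def[abs_def] by (rule nested_right_vanishes_above2)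

lemma nest_right_vanishes_above2: "\<exists>N. vanishes_above2 (nest_right br br u v w) N"
  using nested_right_vanishes_above2[of v u w] vanishes_above2_swap
  unfolding nest_right_def[abs_def] by fastforce

lemma nest_mid_vanishes_above2: "\<exists>N. vanishes_above2 (nest_mid sc br br u v w) N"
  using nested_left_vanishes_above2[of u v w] shift_expand_vanishes_above2
  unfolding nest_mid_eq_shift_expand by blast

lemma peval2_nest_left:
  "peval2 sc (nest_left br br u v w) c e
   = - peval_op (\<lambda>i. peval sc (nest_right br br w u v i) c) (- [:0, 1:] - [:c + e:])"
proof -
  let ?S = "{k. br w v k \<noteq> 0}"
  have S: "finite ?S" using fin_poly_bracket by (simp add: fin_poly_def)
  have "peval2 sc (nest_left br br u v w) c e = bracket_at u (bracket_at v w e) c"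
    unfolding peval2_def nest_left_def[abs_def] bracket_at_def
    by (simp add: peval_bracket_right fin_poly_bracket)
  also have "\<dots> = - (\<Sum>k\<in>?S. bracket_at u (poly_act ((- [:0, 1:] - [:e:]) ^ k) (br w v k)) c)"
    unfolding bracket_at_skew[of v w e] peval_op_def
    by (simp add: linear_map_neg[OF bracket_at_linear] linear_map_sum[OF bracket_at_linear])
  also have "\<dots> = - (\<Sum>k\<in>?S. poly_act ((- [:0, 1:] - [:c + e:]) ^ k) (bracket_at u (br w v k) c))"
    by (simp only: bracket_at_poly_act pcompose_minus_X_minus_const_power)
  also have "\<dots> = - peval_op (\<lambda>i. peval sc (nest_right br br w u v i) c) (- [:0, 1:] - [:c + e:])"
    unfolding nest_right_def bracket_at_def[symmetric]
    by (subst peval_op_superset[OF S]) (auto simp: linear_map_zero[OF bracket_at_linear])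
  finally show ?thesis .
qed

lemma peval2_nest_right:
  "peval2 sc (nest_right br br u v w) c e
   = peval_op (\<lambda>i. peval sc (nest_mid sc br br w u v i) c) (- [:0, 1:] - [:c + e:])"
proof -
  define Q where "Q = - [:0, 1:] - [:c + e:]"
  define f where "f = (\<lambda>k l. br (br w u k) v l)"
  obtain N1 where N1: "vanishes_above (br w u) N1"
    using fin_poly_bracket fin_poly_vanishes_above_obtain by blast
  obtain N2 where N2: "vanishes_above2 f N2"
    unfolding f_def using nested_left_vanishes_above2 by blast
  define N where "N = max N1 N2"
  have wu: "vanishes_above (br w u) N" and f: "vanishes_above2 f N"
    using vanishes_above_mono[OF N1] vanishes_above2_mono[OF N2] by (simp_all add: N_def)
  have "peval2 sc (nest_right br br u v w) c e = peval sc (\<lambda>i. bracket_at v (br u w i) e) c"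
    by (simp add: peval2_def nest_right_def[abs_def] bracket_at_def)
  also have "\<dots> = bracket_at v (bracket_at u w c) e"
    unfolding bracket_at_def[of u w c]
    by (rule peval_linear_image[OF bracket_at_linear fin_poly_bracket])
  also have "\<dots> = - (\<Sum>k\<le>N. bracket_at v (poly_act ((- [:0, 1:] - [:c:]) ^ k) (br w u k)) e)"
    unfolding bracket_at_skew[of u w c] peval_op_vanishes_above[OF wu]
    by (simp add: linear_map_neg[OF bracket_at_linear] linear_map_sum[OF bracket_at_linear])
  also have "\<dots> = - (\<Sum>k\<le>N. poly_act (Q ^ k) (bracket_at v (br w u k) e))"
    by (simp only: bracket_at_poly_act pcompose_minus_X_minus_const_power Q_def add.commute)
  also have "\<dots> = (\<Sum>k\<le>N. \<Sum>l\<le>N. poly_act (Q ^ k * (Q + [:c:]) ^ l) (f k l))"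
  proof -
    have "Q + [:c:] = - [:0, 1:] - [:e:]" by (simp add: Q_def)
    moreover have "peval_op (br (br w u k) v) P = (\<Sum>l\<le>N. poly_act (P ^ l) (f k l))" for k P
      using peval_op_vanishes_above[OF vanishes_above2_row[OF f]] by (simp add: f_def)
    ultimately show ?thesis
      by (simp add: bracket_at_skew poly_act_mult sum_negf
          linear_map_sum[OF poly_act_linear] linear_map_neg[OF poly_act_linear])
  qed
  also have "\<dots> = peval_op (\<lambda>i. peval sc (nest_mid sc br br w u v i) c) Q"
    unfolding nest_mid_eq_shift_expand f_def[symmetric]
    by (rule peval_op_shift_expand[OF f, symmetric])
  finally show ?thesis by (simp only: Q_def)
qed

lemma peval2_nest_mid:
  "peval2 sc (nest_mid sc br br u v w) c e
   = - peval_op (\<lambda>i. peval sc (nest_left br br w u v i) c) (- [:0, 1:] - [:c + e:])"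
proof -
  define Q where "Q = - [:0, 1:] - [:c + e:]"
  define f where "f = (\<lambda>k l. br (br u v k) w l)"
  define L where "L = nest_left br br w u v"
  obtain N1 where N1: "vanishes_above2 f N1"
    unfolding f_def using nested_left_vanishes_above2 by blast
  obtain N2 where N2: "vanishes_above2 L N2"
    unfolding L_def using nest_left_vanishes_above2 by blast
  define N where "N = max N1 N2"
  have f: "vanishes_above2 f N" and L: "vanishes_above2 L N"
    using vanishes_above2_mono[OF N1] vanishes_above2_mono[OF N2] by (simp_all add: N_def)
  have "peval2 sc (nest_mid sc br br u v w) c e
      = peval_op (\<lambda>i. peval sc (shift_expand sc f i) e) [:c:]"
    by (simp add: peval2_def peval_op_const nest_mid_eq_shift_expand f_def)
  also have "\<dots> = (\<Sum>k\<le>N. \<Sum>l\<le>N. poly_act ([:c:] ^ k * ([:c:] + [:e:]) ^ l) (f k l))"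
    by (rule peval_op_shift_expand[OF f])
  also have "\<dots> = (\<Sum>k\<le>N. sc (c ^ k) (bracket_at (br u v k) w (c + e)))"
    using peval_vanishes_above[OF vanishes_above2_row[OF f]]
    by (simp add: bracket_at_def f_def poly_act_mult poly_act_const_pow V.scale_sum_right)
  also have "\<dots> = (\<Sum>k\<le>N. sc (c ^ k) (- (\<Sum>i\<le>N. poly_act (Q ^ i) (L i k))))"
    using peval_op_vanishes_above[OF vanishes_above2_column[OF L]]
    by (simp add: bracket_at_skew L_def nest_left_def Q_def)
  also have "\<dots> = - (\<Sum>i\<le>N. poly_act (Q ^ i) (\<Sum>k\<le>N. sc (c ^ k) (L i k)))"
    unfolding linear_map_sum[OF poly_act_linear] V.scale_sum_right V.scale_minus_right sum_negf
    by (subst sum.swap) (simp add: linear_map_scale[OF poly_act_linear])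
  also have "\<dots> = - peval_op (\<lambda>i. peval sc (L i) c) Q"
    by (subst peval_op_vanishes_above[OF vanishes_above2_peval_rows[OF L]])
       (simp add: peval_vanishes_above[OF vanishes_above2_row[OF L]])
  finally show ?thesis by (simp only: Q_def L_def)
qed

definition jacobiator :: "'v \<Rightarrow> 'v \<Rightarrow> 'v \<Rightarrow> nat \<Rightarrow> nat \<Rightarrow> 'v" where
  "jacobiator x y z i j =
     nest_left br br x y z i j - nest_mid sc br br x y z i j - nest_right br br x y z i j"

lemma jacobi_terms_vanish_above2:
  obtains N where "vanishes_above2 (nest_left br br x y z) N"
    "vanishes_above2 (nest_mid sc br br x y z) N" "vanishes_above2 (nest_right br br x y z) N"
proof -
  obtain N1 N2 N3 where "vanishes_above2 (nest_left br br x y z) N1"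
    "vanishes_above2 (nest_mid sc br br x y z) N2" "vanishes_above2 (nest_right br br x y z) N3"
    using nest_left_vanishes_above2 nest_mid_vanishes_above2 nest_right_vanishes_above2 by metis
  then show ?thesis
    by (intro that[of "max N1 (max N2 N3)"]) (auto elim!: vanishes_above2_mono)
qed

lemma jacobiator_rotate:
  assumes J: "jacobiator x y z = (\<lambda>i j. 0)"
  shows "jacobiator y z x = (\<lambda>i j. 0)"
proof -
  obtain N where L: "vanishes_above2 (nest_left br br x y z) N"
    and M: "vanishes_above2 (nest_mid sc br br x y z) N"
    and R: "vanishes_above2 (nest_right br br x y z) N"
    by (rule jacobi_terms_vanish_above2)
  obtain N' where L': "vanishes_above2 (nest_left br br y z x) N'"
    and M': "vanishes_above2 (nest_mid sc br br y z x) N'"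
    and R': "vanishes_above2 (nest_right br br y z x) N'"
    by (rule jacobi_terms_vanish_above2)
  have J': "vanishes_above2 (jacobiator y z x) N'"
    using L' M' R' by (simp add: vanishes_above2_def jacobiator_def)
  have fin: "fin_poly (\<lambda>i. peval sc (nest_mid sc br br x y z i) c)"
    "fin_poly (\<lambda>i. peval sc (nest_right br br x y z i) c)" for c
    using vanishes_above2_peval_rows[OF M] vanishes_above2_peval_rows[OF R]
    by (auto simp: fin_poly_iff_vanishes_above)
  have "peval sc (nest_left br br x y z i) c
      = peval sc (nest_mid sc br br x y z i) c + peval sc (nest_right br br x y z i) c" for i c
  proof -
    have "nest_left br br x y z i = (\<lambda>j. nest_mid sc br br x y z i j + nest_right br br x y z i j)"
      using J by (simp add: fun_eq_iff jacobiator_def algebra_simps)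
    then show ?thesis
      using vanishes_above2_row[OF M] vanishes_above2_row[OF R] fin_poly_iff_vanishes_above
      by (metis peval_add)
  qed
  then have LMR: "(\<lambda>i. peval sc (nest_left br br x y z i) c)
      = (\<lambda>i. peval sc (nest_mid sc br br x y z i) c + peval sc (nest_right br br x y z i) c)" for c
    by simp
  have "peval2 sc (jacobiator y z x) c e = 0" for c e
  proof -
    have LM': "vanishes_above2 (\<lambda>i j. nest_left br br y z x i j - nest_mid sc br br y z x i j) N'"
      using L' M' by (simp add: vanishes_above2_def)
    have "peval2 sc (jacobiator y z x) c e
        = peval2 sc (nest_left br br y z x) c e - peval2 sc (nest_mid sc br br y z x) c e
          - peval2 sc (nest_right br br y z x) c e"
      unfolding jacobiator_def[abs_def] peval2_diff[OF LM' R'] peval2_diff[OF L' M'] ..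
    then show ?thesis
      by (simp add: peval2_nest_left peval2_nest_mid peval2_nest_right LMR peval_op_add[OF fin])
  qed
  then show ?thesis
    using peval2_eq_0_imp_eq_0[OF J'] by blast
qed

lemma jacobiator_add_left:
  "jacobiator (x + x') y z i j = jacobiator x y z i j + jacobiator x' y z i j"
  unfolding jacobiator_def nest_left_def nest_right_def nest_mid_def
  by (simp add: add_left add_right sum.distrib algebra_simps)

lemma jacobiator_add_middle:
  "jacobiator x (y + y') z i j = jacobiator x y z i j + jacobiator x y' z i j"
  unfolding jacobiator_def nest_left_def nest_right_def nest_mid_def
  by (simp add: add_left add_right sum.distrib algebra_simps)

lemma jacobiator_add_right:
  "jacobiator x y (z + z') i j = jacobiator x y z i j + jacobiator x y z' i j"
  unfolding jacobiator_def nest_left_def nest_right_def nest_mid_def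
  by (simp add: add_left add_right sum.distrib algebra_simps)

end

section \<open>The direct sum \<open>L\<^sub>0 \<oplus> L\<^sub>1\<close>\<close>

lemma cd_module_iff_cmodule: "cd_module sc d \<longleftrightarrow> cmodule sc d"
  unfolding cd_module_def cmodule_def ..

lemma cd_module_prod:
  assumes "cd_module s0 d0" "cd_module s1 d1"
  shows "cd_module (sum_scale s0 s1) (sum_map d0 d1)"
proof -
  interpret M0: cd_module s0 d0 by fact
  interpret M1: cd_module s1 d1 by fact
  have "vector_space (sum_scale s0 s1)"
    unfolding vector_space_def sum_scale_def
    by (simp add: M0.V.scale_right_distrib M1.V.scale_right_distrib M0.V.scale_left_distrib
        M1.V.scale_left_distrib prod_eq_iff)
  then show ?thesis
    unfolding cd_module_def Vector_Spaces.linear_iff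
    by (simp add: sum_map_def sum_scale_def M0.d_add M1.d_add
        linear_map_scale[OF M0.d_linear] linear_map_scale[OF M1.d_linear])
qed

lemma shift_expand_fst:
  "fst (shift_expand (sum_scale s0 s1) F i j) = shift_expand s0 (\<lambda>k l. fst (F k l)) i j"
  unfolding shift_expand_def sum_scale_def fst_sum by simp

lemma shift_expand_snd:
  "snd (shift_expand (sum_scale s0 s1) F i j) = shift_expand s1 (\<lambda>k l. snd (F k l)) i j"
  unfolding shift_expand_def sum_scale_def snd_sum by simp

locale strict_2term_Linf =
  L0: cd_module s0 d0 + L1: cd_module s1 d1 +
  B00: conformal_bracket s0 d0 s0 d0 s0 d0 b00 +
  B01: conformal_bracket s0 d0 s1 d1 s1 d1 b01 +
  B10: conformal_bracket s1 d1 s0 d0 s1 d1 b10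
  for s0 :: "complex \<Rightarrow> 'a::ab_group_add \<Rightarrow> 'a" and d0
    and s1 :: "complex \<Rightarrow> 'b::ab_group_add \<Rightarrow> 'b" and d1
    and b00 b01 b10 +
  fixes t :: "'b \<Rightarrow> 'a" and N0 :: "'a \<Rightarrow> 'a" and N1 :: "'b \<Rightarrow> 'b"
  assumes t_cd_linear: "cd_linear s1 d1 s0 d0 t"
    and N0_cd_linear: "cd_linear s0 d0 s0 d0 N0"
    and N1_cd_linear: "cd_linear s1 d1 s1 d1 N1"
    and skew01: "b01 p m = (\<lambda>i. - subst_mdl s1 d1 (b10 m p) i)"
    and skew00: "b00 p q = (\<lambda>i. - subst_mdl s0 d0 (b00 q p) i)"
    and t_b01: "t (b01 p m i) = b00 p (t m) i"
    and b01_t: "b01 (t m) n i = b10 m (t n) i"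
    and jacobi00: "nest_left b00 b00 p q r i j - nest_mid s0 b00 b00 p q r i j
                   - nest_right b00 b00 p q r i j = 0"
    and jacobi01: "nest_left b01 b01 p q m i j - nest_mid s1 b01 b00 p q m i j
                   - nest_right b01 b01 p q m i j = 0"
    and t_N1: "t (N1 m) = N0 (t m)"
    and nijenhuis0: "N0 (b00 (N0 p) q i + b00 p (N0 q) i - N0 (b00 p q i)) = b00 (N0 p) (N0 q) i"
    and nijenhuis1: "N1 (b01 (N0 p) m i + b01 p (N1 m) i - N1 (b01 p m i)) = b01 (N0 p) (N1 m) i"

lemma strict_2term_Linf_if_strict_2term_nij_Linf:
  assumes "strict_2term_nij_Linf s0 d0 s1 d1 t b00 b01 b10 N0 N1"
  shows "strict_2term_Linf s0 d0 s1 d1 b00 b01 b10 t N0 N1"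
  using assms
  unfolding strict_2term_nij_Linf_def strict_2term_Linf_def strict_2term_Linf_axioms_def
    conformal_bracket_def cd_module_iff_cmodule
  by (elim conjE) (intro conjI; assumption)

context strict_2term_Linf
begin

abbreviation "sum_sc \<equiv> sum_scale s0 s1"
abbreviation "sum_d \<equiv> sum_map d0 d1"
abbreviation "sum_br \<equiv> sum_bracket s1 d1 t b00 b01"

lemma t_linear: "Vector_Spaces.linear s1 s0 t"
  using t_cd_linear by (simp add: cd_linear_def)

lemma t_d: "t (d1 m) = d0 (t m)"
  using t_cd_linear by (simp add: cd_linear_def)

lemma b10_eq_subst_b01: "b10 m q i = - subst_mdl s1 d1 (b01 q m) i"
proof -
  have "subst_mdl s1 d1 (b01 q m) i = subst_mdl s1 d1 (\<lambda>k. - subst_mdl s1 d1 (b10 m q) k) i"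
    by (subst skew01) (rule refl)
  also have "\<dots> = - b10 m q i"
    by (simp add: L1.subst_mdl_neg L1.subst_mdl_involutive B10.fin_poly_bracket)
  finally show ?thesis by simp
qed

lemma subst_b10: "subst_mdl s1 d1 (b10 m p) i = - b01 p m i"
  by (subst skew01) simp

lemma subst_b01: "subst_mdl s1 d1 (b01 q m) i = - b10 m q i"
  by (simp add: b10_eq_subst_b01)

lemma sum_bracket_eq:
  "sum_br x y i
   = (b00 (fst x) (fst y) i, b01 (fst x + t (snd x)) (snd y) i + b10 (snd x) (fst y) i)"
  unfolding sum_bracket_def by (simp add: subst_b01 B01.add_left algebra_simps)

lemma t_b10: "t (b10 m q i) = b00 (t m) q i"
proof -
  have "t (b10 m q i) = - subst_mdl s0 d0 (\<lambda>k. t (b01 q m k)) i"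
    by (simp add: b10_eq_subst_b01 linear_map_neg[OF t_linear]
        cd_linear_subst_mdl[OF L1.cd_module_axioms L0.cd_module_axioms t_cd_linear
          B01.fin_poly_bracket])
  also have "\<dots> = b00 (t m) q i"
    by (simp add: t_b01) (subst (2) skew00, simp)
  finally show ?thesis .
qed

lemma sum_cd_module: "cd_module sum_sc sum_d"
  by (rule cd_module_prod[OF L0.cd_module_axioms L1.cd_module_axioms])

lemma sum_vector_space: "vector_space sum_sc"
  using sum_cd_module by (simp add: cd_module_def)

lemma fin_poly_sum_bracket: "fin_poly (sum_br x y)"
  unfolding sum_bracket_eq[abs_def]
  by (intro fin_poly_pair fin_poly_add B00.fin_poly_bracket B01.fin_poly_bracket
      B10.fin_poly_bracket)

lemma sum_bracket_lbracket: "lbracket sum_sc sum_sc sum_sc sum_br"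
  unfolding lbracket_def
proof (intro conjI allI)
  show "fin_poly (sum_br x y)" for x y
    by (rule fin_poly_sum_bracket)
  show "Vector_Spaces.linear sum_sc sum_sc (\<lambda>x. sum_br x y j)" for y j
    using sum_vector_space unfolding Vector_Spaces.linear_iff sum_bracket_eq sum_scale_def
    by (simp add: B00.add_left B01.add_left B10.add_left B00.scale_left
        B01.scale_left B10.scale_left linear_map_add[OF t_linear] linear_map_scale[OF t_linear]
        algebra_simps)
  show "Vector_Spaces.linear sum_sc sum_sc (\<lambda>y. sum_br x y j)" for x j
    using sum_vector_space unfolding Vector_Spaces.linear_iff sum_bracket_eq sum_scale_def
    by (simp add: B00.add_right B01.add_right B10.add_right B00.scale_right
        B01.scale_right B10.scale_right algebra_simps)
qed

lemma sum_bracket_sesquilinear: "sesquilinear sum_d sum_d sum_d sum_br"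
  unfolding sesquilinear_def
proof (intro conjI allI)
  fix x y j
  have "d0 (fst x) + t (d1 (snd x)) = d0 (fst x + t (snd x))"
    by (simp add: t_d L0.d_add)
  then show "sum_br (sum_d x) y j = - (if j = 0 then 0 else sum_br x y (j - 1))"
    unfolding sum_bracket_eq sum_map_def
    by (cases j) (simp_all add: B00.d_left B01.d_left B10.d_left zero_prod_def)
  show "sum_br x (sum_d y) j = sum_d (sum_br x y j) + (if j = 0 then 0 else sum_br x y (j - 1))"
    unfolding sum_bracket_eq sum_map_def
    by (cases j)
       (simp_all add: B00.d_right B01.d_right B10.d_right L1.d_add algebra_simps zero_prod_def)
qed

lemma subst_mdl_sum:
  assumes "fin_poly F"
  shows "subst_mdl sum_sc sum_d F i
    = (subst_mdl s0 d0 (\<lambda>k. fst (F k)) i, subst_mdl s1 d1 (\<lambda>k. snd (F k)) i)"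
proof -
  have "cd_linear sum_sc sum_d s0 d0 fst" "cd_linear sum_sc sum_d s1 d1 snd"
    unfolding cd_linear_def Vector_Spaces.linear_iff
    by (simp_all add: sum_vector_space L0.vector_space L1.vector_space sum_scale_def sum_map_def)
  then show ?thesis
    using cd_linear_subst_mdl[OF sum_cd_module L0.cd_module_axioms _ assms]
      cd_linear_subst_mdl[OF sum_cd_module L1.cd_module_axioms _ assms]
    by (simp add: prod_eq_iff)
qed

lemma sum_bracket_skew: "sum_br x y = (\<lambda>i. - subst_mdl sum_sc sum_d (sum_br y x) i)"
proof
  fix i
  obtain p m q n where x: "x = (p, m)" and y: "y = (q, n)" by (cases x, cases y)
  have "subst_mdl s1 d1 (\<lambda>k. b01 (q + t n) m k + b10 n p k) i = - b10 m (q + t n) i - b01 p n i"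
    by (simp add: L1.subst_mdl_add[OF B01.fin_poly_bracket B10.fin_poly_bracket]
        subst_b01 subst_b10)
  moreover have "subst_mdl s0 d0 (b00 q p) i = - b00 p q i"
    by (subst (2) skew00) simp
  moreover have "(\<lambda>k. fst (sum_br y x k)) = b00 q p"
    and "(\<lambda>k. snd (sum_br y x k)) = (\<lambda>k. b01 (q + t n) m k + b10 n p k)"
    by (simp_all add: x y sum_bracket_eq)
  ultimately show "sum_br x y i = - subst_mdl sum_sc sum_d (sum_br y x) i"
    unfolding subst_mdl_sum[OF fin_poly_sum_bracket]
    by (simp add: x y sum_bracket_eq B10.add_right B01.add_left b01_t)
qed

sublocale S: skew_conformal_algebra sum_sc sum_d sum_br
  using sum_cd_module sum_bracket_lbracket sum_bracket_sesquilinear sum_bracket_skew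
  unfolding skew_conformal_algebra_def skew_conformal_algebra_axioms_def conformal_bracket_def
  by blast

lemma fst_plus_t_snd_sum_bracket:
  "fst (sum_br x y i) + t (snd (sum_br x y i)) = b00 (fst x + t (snd x)) (fst y + t (snd y)) i"
  by (simp add: sum_bracket_eq linear_map_add[OF t_linear] t_b01 t_b10 B00.add_left B00.add_right
      algebra_simps)

lemma jacobiator_L1_right: "S.jacobiator (p, m) (q, n) (0, k) = (\<lambda>i j. 0)"
proof -
  define p' q' where "p' = p + t m" and "q' = q + t n"
  have into_L1: "sum_br u (0, w) i = (0, b01 (fst u + t (snd u)) w i)" for u w i
    by (simp add: sum_bracket_eq)
  have "sum_br (sum_br (p, m) (q, n) a) (0, k) l = (0, b01 (b00 p' q' a) k l)" for a l
    by (simp only: into_L1 fst_plus_t_snd_sum_bracket p'_def q'_def fst_conv snd_conv)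
  moreover have "b01 p' (b01 q' k j) i - shift_expand s1 (\<lambda>a l. b01 (b00 p' q' a) k l) i j
      - b01 q' (b01 p' k i) j = 0" for i j
    using jacobi01[of p' q' k i j]
    unfolding nest_left_def nest_right_def nest_mid_eq_shift_expand .
  ultimately show ?thesis
    unfolding S.jacobiator_def nest_left_def nest_right_def nest_mid_eq_shift_expand
    by (simp add: fun_eq_iff prod_eq_iff into_L1 p'_def[symmetric] q'_def[symmetric]
        shift_expand_fst shift_expand_snd zero_prod_def[symmetric])
qed

lemma jacobiator_L0: "S.jacobiator (p, 0) (q, 0) (r, 0) = (\<lambda>i j. 0)"
proof -
  have in_L0: "sum_br (a, 0) (b, 0) i = (b00 a b i, 0)" for a b i
    by (simp add: sum_bracket_eq)
  have "b00 p (b00 q r j) i - shift_expand s0 (\<lambda>a l. b00 (b00 p q a) r l) i j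
      - b00 q (b00 p r i) j = 0" for i j
    using jacobi00[of p q r i j]
    unfolding nest_left_def nest_right_def nest_mid_eq_shift_expand .
  then show ?thesis
    unfolding S.jacobiator_def nest_left_def nest_right_def nest_mid_eq_shift_expand
    by (simp add: fun_eq_iff prod_eq_iff in_L0 shift_expand_fst shift_expand_snd)
qed

lemma sum_jacobiator: "S.jacobiator x y z = (\<lambda>i j. 0)"
proof -
  have L1_right: "S.jacobiator x y (0, k) = (\<lambda>i j. 0)" for x y k
    using jacobiator_L1_right[of "fst x" "snd x" "fst y" "snd y" k] by simp
  have L1_middle: "S.jacobiator x (0, k) y = (\<lambda>i j. 0)" for x y k
    by (rule S.jacobiator_rotate[OF L1_right])
  have L1_left: "S.jacobiator (0, k) x y = (\<lambda>i j. 0)" for x y k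
    by (rule S.jacobiator_rotate[OF L1_middle])
  obtain p m q n r k where x: "x = (p, 0) + (0, m)" and y: "y = (q, 0) + (0, n)"
    and z: "z = (r, 0) + (0, k)"
    by (cases x, cases y, cases z) simp
  show ?thesis
    unfolding fun_eq_iff x y z S.jacobiator_add_left S.jacobiator_add_middle S.jacobiator_add_right
    by (simp add: L1_right L1_middle L1_left jacobiator_L0)
qed

lemma sum_lie_conformal: "lie_conformal sum_sc sum_d sum_br"
proof -
  have "nest_left sum_br sum_br x y z
      = (\<lambda>i j. nest_mid sum_sc sum_br sum_br x y z i j + nest_right sum_br sum_br x y z i j)"
    for x y z
    using sum_jacobiator[of x y z] by (simp add: fun_eq_iff S.jacobiator_def algebra_simps)
  then show ?thesis
    unfolding lie_conformal_def cd_module_iff_cmodule[symmetric]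
    using sum_cd_module sum_bracket_lbracket sum_bracket_sesquilinear sum_bracket_skew by blast
qed

lemma N0_linear: "Vector_Spaces.linear s0 s0 N0"
  using N0_cd_linear by (simp add: cd_linear_def)

lemma N1_linear: "Vector_Spaces.linear s1 s1 N1"
  using N1_cd_linear by (simp add: cd_linear_def)

text \<open>The Nijenhuis identity for \<open>b10\<close> is transported from the one for \<open>b01\<close> by skew-symmetry,
  since \<open>N1\<close> commutes with the substitution \<open>\<lambda> := -\<partial> - \<lambda>\<close>.\<close>

lemma nijenhuis10: "N1 (b10 (N1 m) q i + b10 m (N0 q) i - N1 (b10 m q i)) = b10 (N1 m) (N0 q) i"
proof -
  define G where "G k = b01 (N0 q) m k + b01 q (N1 m) k - N1 (b01 q m k)" for k
  have fin_N1: "fin_poly (\<lambda>k. N1 (b01 q m k))"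
    by (rule fin_poly_linear_image[OF N1_linear B01.fin_poly_bracket])
  have fin_sum: "fin_poly (\<lambda>k. b01 (N0 q) m k + b01 q (N1 m) k)"
    by (intro fin_poly_add B01.fin_poly_bracket)
  have fin_G: "fin_poly G"
    unfolding G_def diff_conv_add_uminus
    by (intro fin_poly_add fin_sum fin_poly_linear_image[OF L1.V.linear_uminus fin_N1])
  have N1_subst: "N1 (subst_mdl s1 d1 p i) = subst_mdl s1 d1 (\<lambda>k. N1 (p k)) i" if "fin_poly p" for p
    by (rule cd_linear_subst_mdl[OF L1.cd_module_axioms L1.cd_module_axioms N1_cd_linear that])
  have "b10 (N1 m) (N0 q) i = - subst_mdl s1 d1 (\<lambda>k. N1 (G k)) i"
    by (simp add: b10_eq_subst_b01 G_def nijenhuis1)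
  also have "\<dots> = - N1 (subst_mdl s1 d1 G i)"
    by (simp add: N1_subst[OF fin_G])
  also have "subst_mdl s1 d1 G i = - (b10 (N1 m) q i + b10 m (N0 q) i - N1 (b10 m q i))"
    unfolding G_def L1.subst_mdl_diff[OF fin_sum fin_N1]
      L1.subst_mdl_add[OF B01.fin_poly_bracket B01.fin_poly_bracket]
    by (simp add: N1_subst[OF B01.fin_poly_bracket, symmetric] subst_b01
        linear_map_neg[OF N1_linear])
  finally show ?thesis
    by (simp only: linear_map_neg[OF N1_linear] minus_minus)
qed

lemma sum_nijenhuis_op: "nijenhuis_op sum_sc sum_d sum_br (sum_map N0 N1)"
  unfolding nijenhuis_op_def
proof (intro conjI allI)
  show "cd_linear sum_sc sum_d sum_sc sum_d (sum_map N0 N1)"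
    using sum_vector_space N0_cd_linear N1_cd_linear
    unfolding cd_linear_def Vector_Spaces.linear_iff
    by (simp add: sum_scale_def sum_map_def)
  fix x y :: "'a \<times> 'b" and j
  obtain p m q n where x: "x = (p, m)" and y: "y = (q, n)" by (cases x, cases y)
  have "N0 p + t (N1 m) = N0 (p + t m)"
    by (simp add: t_N1 linear_map_add[OF N0_linear])
  then show "sum_br (sum_map N0 N1 x) (sum_map N0 N1 y) j
    = sum_map N0 N1 (sum_br (sum_map N0 N1 x) y j + sum_br x (sum_map N0 N1 y) j
                     - sum_map N0 N1 (sum_br x y j))"
    unfolding x y sum_map_def
    by (simp add: sum_bracket_eq nijenhuis0 flip: nijenhuis1[of "p + t m"] nijenhuis10)
       (simp add: linear_map_add[OF N1_linear] linear_map_diff[OF N1_linear] algebra_simps)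
qed

end

theorem proposition4p11:
  fixes s0 :: "complex \<Rightarrow> 'a::ab_group_add \<Rightarrow> 'a" and d0 :: "'a \<Rightarrow> 'a"
    and s1 :: "complex \<Rightarrow> 'b::ab_group_add \<Rightarrow> 'b" and d1 :: "'b \<Rightarrow> 'b"
    and t :: "'b \<Rightarrow> 'a"
    and b00 :: "'a \<Rightarrow> 'a \<Rightarrow> nat \<Rightarrow> 'a" and b01 :: "'a \<Rightarrow> 'b \<Rightarrow> nat \<Rightarrow> 'b"
    and b10 :: "'b \<Rightarrow> 'a \<Rightarrow> nat \<Rightarrow> 'b"
    and N0 :: "'a \<Rightarrow> 'a" and N1 :: "'b \<Rightarrow> 'b"
  assumes "strict_2term_nij_Linf s0 d0 s1 d1 t b00 b01 b10 N0 N1"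
  shows "nijenhuis_lie_conformal (sum_scale s0 s1) (sum_map d0 d1)
           (sum_bracket s1 d1 t b00 b01) (sum_map N0 N1)"
proof -
  interpret strict_2term_Linf s0 d0 s1 d1 b00 b01 b10 t N0 N1
    using assms by (rule strict_2term_Linf_if_strict_2term_nij_Linf)
  show ?thesis
    unfolding nijenhuis_lie_conformal_def using sum_lie_conformal sum_nijenhuis_op ..
qed

end
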